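(* Let $\hat{\mathbb{N}}=\{n\in\mathbb{N}: n\ge 3\}$ and let $X,Y \subseteq \hat{\mathbb{N}}$ be non-empty. Then $\bigcap_{n \in X} \mathrm{pPol}\, R^{\Lambda}_n = \bigcap_{m \in Y} \mathrm{pPol}\, R^{\Lambda}_m$ if and only if $X = Y$.
   Context: Partial functions are on $\{0,1\}$: an $n$-ary partial function is a map $f:\operatorname{dom} f\to\{0,1\}$ with $\operatorname{dom} f\subseteq\{0,1\}^n$. For $\rho\subseteq\{0,1\}^h$, $\mathrm{pPol}\,\rho$ is the set of partial functions $f$ such that for every $h\times n$ matrix whose rows lie in $\operatorname{dom} f$ and whose columns lie in $\rho$, the column obtained by applying $f$ row-wise lies in $\rho$. For $m\ge3$, $R^{\Lambda}_m\subseteq\{0,1\}^{m+1}$ is the set of tuples $(x_1,\dots,x_{m+1})$ satisfying $x_1\lor\lnot x_2\lor\cdots\lor\lnot x_{m+1}$ and, for all pairwise distinct $i,j_1,j_2\in\{2,\dots,m+1\}$, $x_i\lor\lnot x_1\lor\lnot x_{j_1}\lor\lnot x_{j_2}$. *)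

theory Defs
  imports Main
begin

text \<open>Tuples over {0,1} are bool lists (False = 0, True = 1).
An n-ary partial function is a pair (n, f) where f :: bool list \<Rightarrow> bool option
is a map whose domain is contained in the set of lists of length n.\<close>

type_synonym pfun = "nat \<times> (bool list \<Rightarrow> bool option)"

definition is_pfun :: "pfun \<Rightarrow> bool" where
  "is_pfun F \<longleftrightarrow> dom (snd F) \<subseteq> {x. length x = fst F}"

text \<open>A matrix with h rows and n columns is given by its list of columns cs
(length n, each column of length h); row i is map (\<lambda>c. c ! i) cs.\<close>

definition pPol :: "nat \<Rightarrow> bool list set \<Rightarrow> pfun set" where
  "pPol h rho = {F. is_pfun F \<and>
     (\<forall>cs. length cs = fst F \<longrightarrow> (\<forall>c\<in>set cs. c \<in> rho) \<longrightarrow>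
        (\<forall>i<h. map (\<lambda>c. c ! i) cs \<in> dom (snd F)) \<longrightarrow>
        map (\<lambda>i. the (snd F (map (\<lambda>c. c ! i) cs))) [0..<h] \<in> rho)}"

text \<open>R^Lambda_m as a subset of {0,1}^(m+1); x_k is x ! (k-1).\<close>

definition RLam :: "nat \<Rightarrow> bool list set" where
  "RLam m = {x. length x = m + 1 \<and>
     (x ! 0 \<or> (\<exists>k\<in>{2..m+1}. \<not> x ! (k - 1))) \<and>
     (\<forall>i\<in>{2..m+1}. \<forall>j1\<in>{2..m+1}. \<forall>j2\<in>{2..m+1}.
        i \<noteq> j1 \<and> i \<noteq> j2 \<and> j1 \<noteq> j2 \<longrightarrow>
        x ! (i - 1) \<or> \<not> x ! 0 \<or> \<not> x ! (j1 - 1) \<or> \<not> x ! (j2 - 1))}"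

definition pPolRLam :: "nat \<Rightarrow> pfun set" where
  "pPolRLam m = pPol (m + 1) (RLam m)"

end

theory Submission
  imports Defs
begin

text \<open>
  For \<open>n \<ge> 3\<close> let \<open>f\<^sub>n\<close> be the \<open>2n\<close>-ary partial function defined only on
  \<open>u = 1\<^sup>n0\<^sup>n\<close>, with value 0, and on the rows \<open>v\<^sub>j = e\<^sub>j\<close> followed by the
  complement of \<open>e\<^sub>j\<close> (\<open>j < n\<close>), with value 1. Stacking \<open>u, v\<^sub>0, \<dots>, v\<^bsub>n-1\<^esub>\<close>
  gives a matrix whose columns lie in \<open>R\<^sup>\<Lambda>\<^sub>n\<close> while its image \<open>(0,1,\<dots>,1)\<close> does
  not, so \<open>f\<^sub>n \<notin> pPol R\<^sup>\<Lambda>\<^sub>n\<close>. Conversely, let a matrix with columns in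
  \<open>R\<^sup>\<Lambda>\<^sub>m\<close> and rows in the domain of \<open>f\<^sub>n\<close> have its image outside \<open>R\<^sup>\<Lambda>\<^sub>m\<close>.
  If the image violates the first clause, row 0 is \<open>u\<close> and the labels \<open>j\<close> of the
  remaining rows \<open>v\<^sub>j\<close> form a bijection onto \<open>{0,\<dots>,n-1}\<close>, so \<open>m = n\<close>. If it violates
  a second clause, row 0 is some \<open>v\<^sub>i\<close> and two labels must cover all indices but \<open>i\<close>,
  which forces \<open>n = 3\<close> and leaves room for only three rows below row 0, so \<open>m = 3\<close>.
  Hence \<open>f\<^sub>n \<in> pPol R\<^sup>\<Lambda>\<^sub>m\<close> exactly when \<open>m \<noteq> n\<close>, and \<open>f\<^sub>n\<close> separates the two
  intersections whenever \<open>n\<close> lies in one index set but not the other.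
\<close>

lemma RLam_iff:
  "x \<in> RLam m \<longleftrightarrow> length x = m + 1 \<and> (x ! 0 \<or> (\<exists>k\<in>{1..m}. \<not> x ! k)) \<and>
     (\<forall>a\<in>{1..m}. \<forall>b\<in>{1..m}. \<forall>c\<in>{1..m}. a \<noteq> b \<and> a \<noteq> c \<and> b \<noteq> c \<longrightarrow>
        x ! a \<or> \<not> x ! 0 \<or> \<not> x ! b \<or> \<not> x ! c)"
proof -
  have "{2..m+1} = Suc ` {1..m}" by simp
  then show ?thesis
    unfolding RLam_def by (simp del: image_Suc_atLeastAtMost)
qed

lemma pPolI:
  assumes "is_pfun F"
    and "\<And>cs. length cs = fst F \<Longrightarrow> \<forall>c\<in>set cs. c \<in> rho \<Longrightarrow>
           \<forall>i<h. map (\<lambda>c. c ! i) cs \<in> dom (snd F) \<Longrightarrow>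
           map (\<lambda>i. the (snd F (map (\<lambda>c. c ! i) cs))) [0..<h] \<in> rho"
  shows "F \<in> pPol h rho"
  using assms unfolding pPol_def by blast

lemma pPolD:
  assumes "F \<in> pPol h rho" "length cs = fst F" "\<forall>c\<in>set cs. c \<in> rho"
    "\<forall>i<h. map (\<lambda>c. c ! i) cs \<in> dom (snd F)"
  shows "map (\<lambda>i. the (snd F (map (\<lambda>c. c ! i) cs))) [0..<h] \<in> rho"
  using assms unfolding pPol_def by blast

definition u_row :: "nat \<Rightarrow> bool list" where
  "u_row n = replicate n True @ replicate n False"

definition v_row :: "nat \<Rightarrow> nat \<Rightarrow> bool list" where
  "v_row n j = map (\<lambda>c. c = j) [0..<n] @ map (\<lambda>c. c \<noteq> j) [0..<n]"

definition sep_map :: "nat \<Rightarrow> bool list \<Rightarrow> bool option" where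
  "sep_map n x =
     (if x = u_row n then Some False else if \<exists>j<n. x = v_row n j then Some True else None)"

definition sep_pfun :: "nat \<Rightarrow> pfun" where
  "sep_pfun n = (2 * n, sep_map n)"

lemma length_u_row [simp]: "length (u_row n) = 2 * n"
  by (simp add: u_row_def)

lemma length_v_row [simp]: "length (v_row n j) = 2 * n"
  by (simp add: v_row_def)

lemma nth_u_row:
  assumes "c < n"
  shows "u_row n ! c" and "\<not> u_row n ! (n + c)"
  using assms by (simp_all add: u_row_def nth_append)

lemma nth_v_row:
  assumes "c < n"
  shows "v_row n j ! c \<longleftrightarrow> c = j" and "v_row n j ! (n + c) \<longleftrightarrow> c \<noteq> j"
  using assms by (simp_all add: v_row_def nth_append)

lemma v_row_neq_u_row:
  assumes "2 \<le> n"
  shows "v_row n j \<noteq> u_row n"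
proof
  assume eq: "v_row n j = u_row n"
  define c where "c = (if j = 0 then 1 else 0 :: nat)"
  have "c < n" "c \<noteq> j" using assms by (auto simp: c_def)
  then show False
    using arg_cong[OF eq, of "\<lambda>x. x ! (n + c)"] by (simp add: nth_u_row nth_v_row)
qed

lemma dom_sep_map: "x \<in> dom (sep_map n) \<longleftrightarrow> x = u_row n \<or> (\<exists>j<n. x = v_row n j)"
  by (auto simp: sep_map_def split: if_splits)

lemma sep_map_eq:
  assumes "2 \<le> n" "x \<in> dom (sep_map n)"
  shows "the (sep_map n x) \<longleftrightarrow> x \<noteq> u_row n"
proof (cases "x = u_row n")
  case False
  with assms(2) obtain j where "j < n" "x = v_row n j" by (auto simp: dom_sep_map)
  with False show ?thesis by (auto simp: sep_map_def)
qed (simp add: sep_map_def)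

lemma is_pfun_sep_pfun: "is_pfun (sep_pfun n)"
  unfolding is_pfun_def
proof
  fix x assume "x \<in> dom (snd (sep_pfun n))"
  then have "x = u_row n \<or> (\<exists>j<n. x = v_row n j)"
    by (simp only: sep_pfun_def snd_conv dom_sep_map)
  then show "x \<in> {x. length x = fst (sep_pfun n)}"
    by (auto simp: sep_pfun_def)
qed

locale RLam_columns =
  fixes n m :: nat and cs :: "bool list list"
  assumes length_cs: "length cs = 2 * n"
    and columns_RLam: "\<forall>c\<in>set cs. c \<in> RLam m"
begin

text \<open>Column \<open>c\<close> of the matrix is \<open>cs ! c\<close>; its entry \<open>cs ! c ! t\<close> in row \<open>t\<close> is the
  coordinate \<open>x\<^bsub>t+1\<^esub>\<close> of the paper.\<close>

definition row :: "nat \<Rightarrow> bool list" where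
  "row t = map (\<lambda>c. c ! t) cs"

lemma entry_u_row:
  assumes "row t = u_row n" "c < n"
  shows "cs ! c ! t" and "\<not> cs ! (n + c) ! t"
  using arg_cong[OF assms(1), of "\<lambda>x. x ! c"] arg_cong[OF assms(1), of "\<lambda>x. x ! (n + c)"]
    assms(2) length_cs by (simp_all add: row_def nth_u_row)

lemma entry_v_row:
  assumes "row t = v_row n j" "c < n"
  shows "cs ! c ! t \<longleftrightarrow> c = j" and "cs ! (n + c) ! t \<longleftrightarrow> c \<noteq> j"
  using arg_cong[OF assms(1), of "\<lambda>x. x ! c"] arg_cong[OF assms(1), of "\<lambda>x. x ! (n + c)"]
    assms(2) length_cs by (simp_all add: row_def nth_v_row)

lemma column_RLam: "c < 2 * n \<Longrightarrow> cs ! c \<in> RLam m"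
  using columns_RLam length_cs by simp

lemma column_first_clause:
  assumes "c < 2 * n" "\<not> cs ! c ! 0"
  obtains k where "k \<in> {1..m}" "\<not> cs ! c ! k"
  using column_RLam[OF assms(1)] assms(2) unfolding RLam_iff by blast

lemma column_second_clause:
  assumes "c < 2 * n" "cs ! c ! 0" "a \<in> {1..m}" "b \<in> {1..m}" "d \<in> {1..m}"
    "a \<noteq> b" "a \<noteq> d" "b \<noteq> d" "cs ! c ! b" "cs ! c ! d"
  shows "cs ! c ! a"
  using column_RLam[OF assms(1)] assms(2-) unfolding RLam_iff by blast

lemma card_eq_if_first_row_u:
  assumes n: "2 \<le> n" and row0: "row 0 = u_row n"
    and K: "\<And>t. t \<in> {1..m} \<Longrightarrow> K t < n \<and> row t = v_row n (K t)"
  shows "m = n"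
proof -
  have surj: "K ` {1..m} = {..<n}"
  proof
    show "{..<n} \<subseteq> K ` {1..m}"
    proof
      fix c assume "c \<in> {..<n}"
      then have c: "c < n" by simp
      obtain k where k: "k \<in> {1..m}" "\<not> cs ! (n + c) ! k"
        using column_first_clause[of "n + c"] entry_u_row(2)[OF row0 c] c by auto
      then show "c \<in> K ` {1..m}" using entry_v_row(2)[of k "K k" c] K c by auto
    qed
  qed (use K in auto)
  \<comment> \<open>By the second clause on column \<open>K s\<close>, a repeated label would be shared by all rows.\<close>
  have "inj_on K {1..m}"
  proof (rule inj_onI, rule ccontr)
    fix s t assume st: "s \<in> {1..m}" "t \<in> {1..m}" "K s = K t" "s \<noteq> t"
    define c where "c = K s"
    have c: "c < n" using K st(1) by (simp add: c_def)
    have const: "K r = c" if r: "r \<in> {1..m}" for r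
    proof (cases "r = s \<or> r = t")
      case False
      have "cs ! c ! s" "cs ! c ! t"
        using entry_v_row(1)[of _ _ c] K st c by (auto simp: c_def)
      then have "cs ! c ! r"
        using column_second_clause[of c r s t] entry_u_row(1)[OF row0 c] c r st False by auto
      then show ?thesis using entry_v_row(1)[of r "K r" c] K r c by auto
    qed (use st c_def in auto)
    define c' where "c' = (if c = 0 then 1 else 0 :: nat)"
    have "c' < n" "c' \<noteq> c" using n by (auto simp: c'_def)
    then show False using surj const by (metis imageE lessThan_iff)
  qed
  then have "card {1..m} = card {..<n}" using surj card_image by fastforce
  then show ?thesis by simp
qed

lemma labels_cover_if_first_row_v:
  assumes row0: "row 0 = v_row n i"
    and "t \<in> {1..m}" "s \<in> {1..m}" "s' \<in> {1..m}" "t \<noteq> s" "t \<noteq> s'" "s \<noteq> s'"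
    and row_t: "row t = u_row n" and "row s = v_row n p" "row s' = v_row n q"
    and j: "j < n" "j \<noteq> i"
  shows "j = p \<or> j = q"
proof (rule ccontr)
  assume "\<not> (j = p \<or> j = q)"
  then have "cs ! (n + j) ! s" "cs ! (n + j) ! s'"
    using entry_v_row(2) assms by auto
  moreover have "cs ! (n + j) ! 0" using entry_v_row(2)[OF row0 j(1)] j(2) by simp
  ultimately have "cs ! (n + j) ! t"
    using column_second_clause[of "n + j" t s s'] assms by auto
  then show False using entry_u_row(2)[OF row_t j(1)] by simp
qed

lemma card_eq_if_first_row_v:
  assumes n: "3 \<le> n" and row0: "row 0 = v_row n i" and i: "i < n"
    and t: "t0 \<in> {1..m}" "t1 \<in> {1..m}" "t2 \<in> {1..m}" "t0 \<noteq> t1" "t0 \<noteq> t2" "t1 \<noteq> t2"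
    and row_t0: "row t0 = u_row n"
    and row_t1: "row t1 = v_row n p" "p < n" and row_t2: "row t2 = v_row n q" "q < n"
    and rows: "\<And>t. t \<in> {1..m} \<Longrightarrow> row t = u_row n \<or> (\<exists>k<n. row t = v_row n k)"
  shows "m = n"
proof -
  have cover: "{..<n} - {i} \<subseteq> {p, q}"
    using labels_cover_if_first_row_v[OF row0 t row_t0 row_t1(1) row_t2(1)] by auto
  have card_cover: "card ({..<n} - {i}) = n - 1" using i by simp
  have not_single: "\<not> {..<n} - {i} \<subseteq> {r}" for r
  proof
    assume "{..<n} - {i} \<subseteq> {r}"
    then have "card ({..<n} - {i}) \<le> card {r}" by (intro card_mono) auto
    then show False using card_cover n by simp
  qed
  have pi: "p \<noteq> i" and qi: "q \<noteq> i" and pq: "p \<noteq> q"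
    using cover not_single by blast+
  have "n - 1 \<le> card {p, q}"
    using card_mono[OF _ cover] card_cover by simp
  also have "\<dots> \<le> 2" by (simp add: card_insert_if)
  finally have n3: "n = 3" using n by simp
  \<comment> \<open>Another \<open>u\<close>-row breaks the second clause on column \<open>i\<close>; another \<open>v\<^sub>k\<close>-row
    would need \<open>k = p\<close> and \<open>k = q\<close> by the covering property.\<close>
  have "{1..m} \<subseteq> {t0, t1, t2}"
  proof
    fix t assume tm: "t \<in> {1..m}"
    show "t \<in> {t0, t1, t2}"
    proof (rule ccontr)
      assume new: "t \<notin> {t0, t1, t2}"
      from rows[OF tm] show False
      proof (elim disjE exE conjE)
        assume row_t: "row t = u_row n"
        have "cs ! i ! t1"
          using column_second_clause[of i t1 t0 t] entry_v_row(1)[OF row0 i]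
            entry_u_row(1)[OF row_t0 i] entry_u_row(1)[OF row_t i] i t tm new by auto
        then show False using entry_v_row(1)[OF row_t1(1) i] pi by simp
      next
        fix k assume k: "k < n" "row t = v_row n k"
        have "q = k \<or> q = p"
          using labels_cover_if_first_row_v[OF row0 _ tm _ _ _ _ row_t0 k(2) row_t1(1) row_t2(2) qi]
            t new by blast
        moreover have "p = k \<or> p = q"
          using labels_cover_if_first_row_v[OF row0 _ tm _ _ _ _ row_t0 k(2) row_t2(1) row_t1(2) pi]
            t new by blast
        ultimately show False using pq by auto
      qed
    qed
  qed
  then have "card {1..m} \<le> card {t0, t1, t2}" by (intro card_mono) auto
  also have "\<dots> \<le> 3" by (simp add: card_insert_if)
  finally have "m \<le> 3" by simp
  moreover have "card {t0, t1, t2} \<le> card {1..m}" using t by (intro card_mono) auto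
  then have "3 \<le> m" using t by simp
  ultimately show ?thesis using n3 by simp
qed

lemma sep_output_RLam:
  assumes n: "3 \<le> n" and mn: "m \<noteq> n" and rows: "\<forall>t<m + 1. row t \<in> dom (sep_map n)"
  shows "map (\<lambda>t. the (sep_map n (row t))) [0..<m + 1] \<in> RLam m"
proof -
  define w where "w = map (\<lambda>t. the (sep_map n (row t))) [0..<m + 1]"
  have row_cases: "row t = u_row n \<or> (\<exists>k<n. row t = v_row n k)" if "t \<le> m" for t
    using rows that by (auto simp: dom_sep_map)
  have w: "w ! t \<longleftrightarrow> row t \<noteq> u_row n" if "t \<le> m" for t
  proof -
    have "w ! t = the (sep_map n (row t))"
      using that by (simp add: w_def nth_map_upt del: upt_Suc)
    then show ?thesis using sep_map_eq[of n "row t"] rows that n by auto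
  qed
  have first: "w ! 0 \<or> (\<exists>k\<in>{1..m}. \<not> w ! k)"
  proof (rule ccontr)
    assume no: "\<not> ?thesis"
    then have row0: "row 0 = u_row n" using w by simp
    have "\<exists>k<n. row t = v_row n k" if "t \<in> {1..m}" for t
      using no w[of t] row_cases[of t] that by auto
    then obtain K where "\<And>t. t \<in> {1..m} \<Longrightarrow> K t < n \<and> row t = v_row n (K t)"
      by metis
    then have "m = n" using card_eq_if_first_row_u[OF _ row0, of K] n by simp
    with mn show False ..
  qed
  have second: "w ! a \<or> \<not> w ! 0 \<or> \<not> w ! b \<or> \<not> w ! c"
    if t: "a \<in> {1..m}" "b \<in> {1..m}" "c \<in> {1..m}" "a \<noteq> b" "a \<noteq> c" "b \<noteq> c" for a b c
  proof (rule ccontr)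
    assume "\<not> ?thesis"
    then have "row a = u_row n" and "\<exists>i<n. row 0 = v_row n i"
      and "\<exists>p<n. row b = v_row n p" and "\<exists>q<n. row c = v_row n q"
      using w row_cases t by auto
    then show False
      using card_eq_if_first_row_v[OF n _ _ t] row_cases mn by fastforce
  qed
  have "length w = m + 1" by (simp add: w_def)
  with first second show ?thesis unfolding w_def[symmetric] RLam_iff by blast
qed

end

lemma sep_pfun_in_pPolRLam:
  assumes "3 \<le> n" "m \<noteq> n"
  shows "sep_pfun n \<in> pPolRLam m"
  unfolding pPolRLam_def
proof (rule pPolI[OF is_pfun_sep_pfun])
  fix cs :: "bool list list"
  assume "length cs = fst (sep_pfun n)" "\<forall>c\<in>set cs. c \<in> RLam m"
    and rows: "\<forall>i<m + 1. map (\<lambda>c. c ! i) cs \<in> dom (snd (sep_pfun n))"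
  then interpret RLam_columns n m cs
    by unfold_locales (simp_all add: sep_pfun_def)
  show "map (\<lambda>i. the (snd (sep_pfun n) (map (\<lambda>c. c ! i) cs))) [0..<m + 1] \<in> RLam m"
    using sep_output_RLam assms rows by (simp add: sep_pfun_def row_def)
qed

lemma sep_pfun_notin_pPolRLam:
  assumes n: "2 \<le> n"
  shows "sep_pfun n \<notin> pPolRLam n"
proof
  define cs where "cs = map (\<lambda>c. True # map (\<lambda>j. c = j) [0..<n]) [0..<n]
    @ map (\<lambda>c. False # map (\<lambda>j. c \<noteq> j) [0..<n]) [0..<n]"
  define row where "row t = map (\<lambda>x. x ! t) cs" for t
  have row0: "row 0 = u_row n"
    by (simp add: row_def cs_def u_row_def comp_def map_replicate_const)
  have row_Suc: "row (Suc j) = v_row n j" if "j < n" for j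
    using that by (simp add: row_def cs_def v_row_def)
  have columns: "\<forall>x\<in>set cs. x \<in> RLam n"
  proof
    fix x assume "x \<in> set cs"
    then obtain c where c: "c < n"
      and "x = True # map (\<lambda>j. c = j) [0..<n] \<or> x = False # map (\<lambda>j. c \<noteq> j) [0..<n]"
      by (auto simp: cs_def)
    then show "x \<in> RLam n"
    proof (elim disjE)
      assume x: "x = True # map (\<lambda>j. c = j) [0..<n]"
      have xk: "x ! k \<longleftrightarrow> k = Suc c" if "k \<in> {1..n}" for k
        using that by (auto simp: x nth_Cons')
      have "\<forall>a\<in>{1..n}. \<forall>b\<in>{1..n}. \<forall>d\<in>{1..n}. a \<noteq> b \<and> a \<noteq> d \<and> b \<noteq> d \<longrightarrow>
          x ! a \<or> \<not> x ! 0 \<or> \<not> x ! b \<or> \<not> x ! d"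
        by (intro ballI impI) (metis xk)
      moreover have "length x = n + 1" "x ! 0" by (simp_all add: x)
      ultimately show ?thesis unfolding RLam_iff by blast
    next
      assume x: "x = False # map (\<lambda>j. c \<noteq> j) [0..<n]"
      have "Suc c \<in> {1..n}" "\<not> x ! Suc c" "\<not> x ! 0" "length x = n + 1"
        using c by (auto simp: x)
      then show ?thesis unfolding RLam_iff by blast
    qed
  qed
  have length_cs: "length cs = 2 * n" by (simp add: cs_def)
  have rows: "\<forall>t<n + 1. row t \<in> dom (sep_map n)"
    using row0 row_Suc by (auto simp: dom_sep_map less_Suc_eq_0_disj)
  assume "sep_pfun n \<in> pPolRLam n"
  then have "map (\<lambda>t. the (sep_map n (row t))) [0..<n + 1] \<in> RLam n" (is "?w \<in> _")
    using pPolD[of "sep_pfun n" "n + 1" "RLam n" cs] length_cs columns rows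
    unfolding pPolRLam_def by (simp add: sep_pfun_def row_def del: upt_Suc)
  moreover have "?w ! t \<longleftrightarrow> t \<noteq> 0" if "t \<le> n" for t
  proof -
    have "?w ! t \<longleftrightarrow> row t \<noteq> u_row n"
      using sep_map_eq[OF n] rows that by (simp add: nth_map_upt del: upt_Suc)
    then show ?thesis
      using row0 row_Suc v_row_neq_u_row[OF n] that by (cases t) auto
  qed
  ultimately show False unfolding RLam_iff by auto
qed

lemma subset_if_INT_pPolRLam_subset:
  assumes "A \<subseteq> {n. 3 \<le> n}" "(\<Inter>m\<in>B. pPolRLam m) \<subseteq> (\<Inter>n\<in>A. pPolRLam n)"
  shows "A \<subseteq> B"
proof
  fix n assume "n \<in> A"
  then have n: "3 \<le> n" and sub: "(\<Inter>m\<in>B. pPolRLam m) \<subseteq> pPolRLam n" using assms by auto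
  show "n \<in> B"
  proof (rule ccontr)
    assume "n \<notin> B"
    then have "sep_pfun n \<in> (\<Inter>m\<in>B. pPolRLam m)" by (blast intro: sep_pfun_in_pPolRLam[OF n])
    then show False using sub sep_pfun_notin_pPolRLam n by auto
  qed
qed

theorem mainTheorem20:
  fixes X Y :: "nat set"
  assumes "X \<noteq> {}" and "Y \<noteq> {}"
    and "X \<subseteq> {n. n \<ge> 3}" and "Y \<subseteq> {n. n \<ge> 3}"
  shows "(\<Inter>n\<in>X. pPolRLam n) = (\<Inter>m\<in>Y. pPolRLam m) \<longleftrightarrow> X = Y"
proof
  assume eq: "(\<Inter>n\<in>X. pPolRLam n) = (\<Inter>m\<in>Y. pPolRLam m)"
  show "X = Y"
  proof
    show "X \<subseteq> Y" using subset_if_INT_pPolRLam_subset[OF assms(3)] eq by simp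
    show "Y \<subseteq> X" using subset_if_INT_pPolRLam_subset[OF assms(4)] eq by simp
  qed
qed simp

end
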